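(* Let $k\in\mathbb{N}_0$ and $f(s)=(s-1/2-k)\,\Gamma(1/2-s)$. Then for every $j\in\mathbb{N}$, \[ \lim_{s\to 1/2+k}f^{(j)}(s)=(-1)^{k+j-1}\,j!\sum_{\ell_1+\ell_2+\dots+\ell_{k+1}=j}\frac{\Gamma^{(\ell_{k+1})}(1)}{\ell_{k+1}!}\prod_{i=1}^{k}(k-i+1)^{-(\ell_i+1)}. \]
   Context: $f^{(j)}$ and $\Gamma^{(\ell)}$ denote derivatives; the sum ranges over tuples $(\ell_1,\dots,\ell_{k+1})$ of nonnegative integers with sum $j$; empty products equal $1$. *)

theory Defs
  imports "HOL-Analysis.Analysis"
begin

end

theory Submission
  imports Defs "HOL-Complex_Analysis.Complex_Analysis"
begin

(* With a = 1/2 + k and u = a - s, the functional equation \<Gamma>(u + 1) = u (u - 1) \<cdots> (u - k) \<Gamma>(u - k)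
   gives f s = - u \<Gamma>(u - k) = - \<Gamma>(1 + u) / ((u - 1) \<cdots> (u - k)) for s \<noteq> a near a. The right-hand
   side is holomorphic in u on the unit disc, so f^(j)(s) tends to (-1)^j times its j-th derivative at
   u = 0. The general Leibniz rule expands that derivative of a product of k + 1 factors into a sum
   over weak compositions of j; the factor 1/(u - m) contributes -l!/m^(l+1) and \<Gamma>(1 + u)
   contributes \<Gamma>^(l)(1). *)

definition weak_compositions :: "'a set \<Rightarrow> nat \<Rightarrow> ('a \<Rightarrow> nat) set" where
  "weak_compositions A n = {l. (\<forall>i. i \<notin> A \<longrightarrow> l i = 0) \<and> sum l A = n}"

lemma finite_weak_compositions:
  assumes "finite A"
  shows "finite (weak_compositions A n)"
proof (rule finite_subset)
  show "weak_compositions A n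
          \<subseteq> {l. \<forall>i. (i \<in> A \<longrightarrow> l i \<in> {..n}) \<and> (i \<notin> A \<longrightarrow> l i = 0)}"
    using assms by (auto simp: weak_compositions_def intro: member_le_sum)
qed (use assms in \<open>intro finite_set_of_finite_funs, auto\<close>)

lemma weak_compositions_empty: "weak_compositions {} n = (if n = 0 then {\<lambda>_. 0} else {})"
  by (auto simp: weak_compositions_def)

lemma bij_betw_weak_compositions_insert:
  assumes "finite A" "x \<notin> A"
  shows "bij_betw (\<lambda>(a, l). l(x := n - a))
           (SIGMA a:{..n}. weak_compositions A a) (weak_compositions (insert x A) n)"
proof (rule bij_betw_byWitness[where f' = "\<lambda>l. (n - l x, l(x := 0))"])
  have sum_upd: "(\<Sum>i\<in>A. if i = x then v else l i) = sum l A" for l :: "'a \<Rightarrow> nat" and v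
    using assms(2) by (intro sum.cong) auto
  show "\<forall>p\<in>(SIGMA a:{..n}. weak_compositions A a).
          (\<lambda>l. (n - l x, l(x := 0))) ((\<lambda>(a, l). l(x := n - a)) p) = p"
    using assms(2) by (auto simp: weak_compositions_def fun_eq_iff)
  show "\<forall>l\<in>weak_compositions (insert x A) n.
          (\<lambda>(a, l). l(x := n - a)) ((\<lambda>l. (n - l x, l(x := 0))) l) = l"
    using assms by (auto simp: weak_compositions_def fun_eq_iff)
  show "(\<lambda>(a, l). l(x := n - a)) ` (SIGMA a:{..n}. weak_compositions A a)
          \<subseteq> weak_compositions (insert x A) n"
    using assms by (auto simp: weak_compositions_def sum_upd)
  show "(\<lambda>l. (n - l x, l(x := 0))) ` weak_compositions (insert x A) n
          \<subseteq> (SIGMA a:{..n}. weak_compositions A a)"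
    using assms by (auto simp: weak_compositions_def sum_upd)
qed

lemma higher_deriv_prod:
  fixes h :: "'a \<Rightarrow> complex \<Rightarrow> complex"
  assumes "finite A" "\<And>i. i \<in> A \<Longrightarrow> h i holomorphic_on S" "open S" "z \<in> S"
  shows "(deriv ^^ n) (\<lambda>w. \<Prod>i\<in>A. h i w) z =
           fact n * (\<Sum>l\<in>weak_compositions A n. \<Prod>i\<in>A. (deriv ^^ l i) (h i) z / fact (l i))"
  using assms(1,2)
proof (induction A arbitrary: n rule: finite_induct)
  case empty
  then show ?case by (simp add: weak_compositions_empty)
next
  case (insert x A)
  define D where "D = (\<lambda>l i. (deriv ^^ l i) (h i) z / fact (l i))"
  have hol: "(\<lambda>w. \<Prod>i\<in>A. h i w) holomorphic_on S" "h x holomorphic_on S"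
    using insert.prems by (auto intro!: holomorphic_on_prod)
  have summand: "of_nat (n choose a) * (fact a * (\<Sum>l\<in>weak_compositions A a. prod (D l) A))
                * (deriv ^^ (n - a)) (h x) z
              = fact n * (\<Sum>l\<in>weak_compositions A a. prod (D (l(x := n - a))) (insert x A))"
    if "a \<le> n" for a
  proof -
    have "(of_nat (n choose a) :: complex) = fact n / (fact a * fact (n - a))"
      using that by (simp add: binomial_fact)
    moreover have "prod (D (l(x := n - a))) (insert x A)
                   = (deriv ^^ (n - a)) (h x) z / fact (n - a) * prod (D l) A" for l
      using insert.hyps by (auto simp: D_def intro!: prod.cong)
    ultimately have "of_nat (n choose a) * fact a * prod (D l) A * (deriv ^^ (n - a)) (h x) z
                     = fact n * prod (D (l(x := n - a))) (insert x A)" for l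
      by simp
    then show ?thesis
      by (simp add: sum_distrib_left sum_distrib_right mult.assoc)
  qed
  have "(deriv ^^ n) (\<lambda>w. \<Prod>i\<in>insert x A. h i w) z
        = (deriv ^^ n) (\<lambda>w. (\<Prod>i\<in>A. h i w) * h x w) z"
    using insert.hyps by (simp add: mult.commute)
  also have "\<dots> = (\<Sum>a\<le>n. of_nat (n choose a) * (deriv ^^ a) (\<lambda>w. \<Prod>i\<in>A. h i w) z
                                 * (deriv ^^ (n - a)) (h x) z)"
    using higher_deriv_mult[OF hol assms(3,4)] by (simp add: atLeast0AtMost)
  also have "\<dots> = (\<Sum>a\<le>n. fact n *
                      (\<Sum>l\<in>weak_compositions A a. prod (D (l(x := n - a))) (insert x A)))"
    using insert.IH insert.prems summand by (intro sum.cong refl) (simp add: D_def)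
  also have "\<dots> = fact n *
                    (\<Sum>a\<le>n. \<Sum>l\<in>weak_compositions A a. prod (D (l(x := n - a))) (insert x A))"
    by (simp add: sum_distrib_left)
  also have "\<dots> = fact n * (\<Sum>(a, l)\<in>(SIGMA a:{..n}. weak_compositions A a).
                                 prod (D (l(x := n - a))) (insert x A))"
    using insert.hyps by (subst sum.Sigma) (auto simp: finite_weak_compositions)
  also have "\<dots> = fact n * (\<Sum>l\<in>weak_compositions (insert x A) n. prod (D l) (insert x A))"
    using sum.reindex_bij_betw[OF bij_betw_weak_compositions_insert[OF insert.hyps]]
    by (simp add: case_prod_unfold)
  finally show ?case by (simp add: D_def)
qed

lemma higher_deriv_complex_of_real:
  fixes F :: "complex \<Rightarrow> complex" and f :: "real \<Rightarrow> real"
  assumes F: "F holomorphic_on S" "open S" and T: "open T"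
    and sub: "\<And>x. x \<in> T \<Longrightarrow> complex_of_real x \<in> S"
    and eq: "\<And>x. x \<in> T \<Longrightarrow> F (of_real x) = of_real (f x)"
    and x: "x \<in> T"
  shows "(deriv ^^ n) F (of_real x) = of_real ((deriv ^^ n) f x)"
  using x
proof (induction n arbitrary: x)
  case 0
  then show ?case using eq by simp
next
  case (Suc n)
  define D where "D = (deriv ^^ Suc n) F (of_real x)"
  have "((deriv ^^ n) F has_field_derivative D) (at (of_real x))"
    using has_field_derivative_higher_deriv[OF F] sub Suc.prems by (simp add: D_def)
  then have "((\<lambda>y. (deriv ^^ n) F (of_real y)) has_vector_derivative D) (at x)"
    using has_vector_derivative_real_field by blast
  then have D: "((\<lambda>y. complex_of_real ((deriv ^^ n) f y)) has_vector_derivative D) (at x)"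
    by (rule has_vector_derivative_transform_within_open[OF _ T Suc.prems]) (simp add: Suc.IH)
  from has_field_derivative_Re[OF D] have "deriv ((deriv ^^ n) f) x = Re D"
    by (simp add: DERIV_imp_deriv)
  moreover from has_field_derivative_Im[OF D] have "((\<lambda>y. 0) has_field_derivative Im D) (at x)"
    by simp
  then have "Im D = 0"
    using DERIV_const DERIV_unique by blast
  ultimately show ?case
    by (simp add: D_def complex_eq_iff)
qed

lemma tendsto_higher_deriv_of_holomorphic_extension:
  fixes F :: "complex \<Rightarrow> complex" and f :: "real \<Rightarrow> real"
  assumes F: "F holomorphic_on ball (of_real a) r" and r: "r > 0"
    and eq: "\<And>x. x \<in> ball a r - {a} \<Longrightarrow> F (of_real x) = of_real (f x)"
  shows "((deriv ^^ n) f \<longlongrightarrow> Re ((deriv ^^ n) F (of_real a))) (at a)"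
proof -
  have "eventually (\<lambda>x. x \<in> ball a r - {a}) (at a)"
    using r by (intro eventually_at_in_open) auto
  then have ev: "eventually (\<lambda>x. Re ((deriv ^^ n) F (of_real x)) = (deriv ^^ n) f x) (at a)"
  proof (rule eventually_mono)
    fix x assume "x \<in> ball a r - {a}"
    then show "Re ((deriv ^^ n) F (of_real x)) = (deriv ^^ n) f x"
      using higher_deriv_complex_of_real[OF F open_ball, of "ball a r - {a}" f x n] eq
      by (simp add: open_Diff dist_norm flip: of_real_diff)
  qed
  have "continuous_on (ball (of_real a) r) ((deriv ^^ n) F)"
    by (intro holomorphic_on_imp_continuous_on holomorphic_higher_deriv F open_ball)
  then have "isCont ((deriv ^^ n) F) (of_real a)"
    using r by (simp add: continuous_on_eq_continuous_at)
  then have "((\<lambda>x. Re ((deriv ^^ n) F (of_real x))) \<longlongrightarrow> Re ((deriv ^^ n) F (of_real a))) (at a)"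
    by (intro tendsto_Re isCont_tendsto_compose[OF _ tendsto_of_real] tendsto_ident_at)
  then show ?thesis
    using ev by (rule Lim_transform_eventually)
qed

lemma tendsto_higher_deriv_of_reflected_holomorphic:
  fixes f :: "real \<Rightarrow> real" and P :: "complex \<Rightarrow> complex"
  assumes P: "P holomorphic_on ball 0 r" and r: "r > 0"
    and eq: "\<And>x. x \<in> ball a r - {a} \<Longrightarrow> P (of_real (a - x)) = of_real (f x)"
  shows "((deriv ^^ n) f \<longlongrightarrow> (-1) ^ n * Re ((deriv ^^ n) P 0)) (at a)"
proof -
  define F where "F = (\<lambda>z. P (-1 * z + complex_of_real a))"
  have maps_to_ball: "-1 * z + complex_of_real a \<in> ball 0 r"
    if "z \<in> ball (complex_of_real a) r" for z
    using that by (simp add: dist_norm norm_minus_commute)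
  have "(P \<circ> (\<lambda>z. -1 * z + complex_of_real a)) holomorphic_on ball (complex_of_real a) r"
  proof (rule holomorphic_on_compose_gen[OF _ P])
    show "(\<lambda>z. -1 * z + complex_of_real a) ` ball (complex_of_real a) r \<subseteq> ball 0 r"
      using maps_to_ball by blast
  qed (intro holomorphic_intros)
  then have "F holomorphic_on ball (complex_of_real a) r"
    by (simp only: F_def o_def)
  then have "((deriv ^^ n) f \<longlongrightarrow> Re ((deriv ^^ n) F (complex_of_real a))) (at a)"
    using r by (rule tendsto_higher_deriv_of_holomorphic_extension)
               (simp add: F_def eq flip: of_real_diff)
  also have "(deriv ^^ n) F (complex_of_real a) = (-1) ^ n * (deriv ^^ n) P 0"
    using r higher_deriv_compose_linear'[OF P open_ball[of "complex_of_real a" r] open_ball _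
                                           maps_to_ball, where z = "complex_of_real a" and n = n]
    by (simp add: F_def)
  finally show ?thesis
    by simp
qed

lemma holomorphic_Gamma_right_half_plane: "Gamma holomorphic_on {z. 0 < Re z}"
  by (rule holomorphic_Gamma)
     (auto dest!: nonpos_Ints_subset_nonpos_Reals[THEN subsetD] simp: complex_nonpos_Reals_iff)

lemma holomorphic_Gamma_ball_1: "Gamma holomorphic_on ball (1 :: complex) 1"
proof (rule holomorphic_on_subset[OF holomorphic_Gamma_right_half_plane], safe)
  fix z :: complex assume "z \<in> ball 1 1"
  then show "0 < Re z"
    using abs_Re_le_cmod[of "1 - z"] by (simp add: dist_norm)
qed

lemma higher_deriv_Gamma_complex_of_real:
  assumes "x > 0"
  shows "(deriv ^^ n) Gamma (complex_of_real x) = of_real ((deriv ^^ n) Gamma x)"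
  using assms
  by (intro higher_deriv_complex_of_real[OF holomorphic_Gamma_right_half_plane
                                            open_halfspace_Re_gt open_greaterThan])
     (auto simp: Gamma_complex_of_real)

lemma higher_deriv_inverse_diff:
  fixes c u :: "'a :: real_normed_field"
  assumes "u \<noteq> c"
  shows "(deriv ^^ n) (\<lambda>w. 1 / (w - c)) u = (-1) ^ n * fact n / (u - c) ^ Suc n"
  using assms
proof (induction n arbitrary: u)
  case 0
  then show ?case by simp
next
  case (Suc n)
  have "eventually (\<lambda>w. w \<noteq> c) (nhds u)"
    using eventually_nhds_in_open[of "-{c}" u] Suc.prems by auto
  then have "(deriv ^^ Suc n) (\<lambda>w. 1 / (w - c)) u
             = deriv (\<lambda>w. (-1) ^ n * fact n / (w - c) ^ Suc n) u"
    by (auto intro!: deriv_cong_ev elim!: eventually_mono simp: Suc.IH)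
  also have "\<dots> = (-1) ^ Suc n * fact (Suc n) / (u - c) ^ Suc (Suc n)"
    using Suc.prems
    by (intro DERIV_imp_deriv) (rule derivative_eq_intros refl | simp add: divide_simps)+
  finally show ?case .
qed

lemma Gamma_plus1_iterated:
  fixes u :: "'a :: Gamma"
  assumes "u - of_nat k \<notin> \<int>\<^sub>\<le>\<^sub>0"
  shows "Gamma (u + 1) = (\<Prod>m\<le>k. u - of_nat m) * Gamma (u - of_nat k)"
proof -
  have "(\<Prod>m\<le>k. u - of_nat m) = pochhammer (u - of_nat k) (Suc k)"
    unfolding pochhammer_prod
    by (rule prod.reindex_bij_witness[of _ "\<lambda>i. k - i" "\<lambda>m. k - m"]) (auto simp: of_nat_diff)
  also have "\<dots> = Gamma (u + 1) / Gamma (u - of_nat k)"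
    using pochhammer_Gamma[OF assms] by (simp add: add_ac)
  finally show ?thesis
    using Gamma_nonzero[OF assms] by simp
qed

(* The pole at k - i + 1 is attached to the index i because the theorem pairs the exponent l i
   with the base k - i + 1. *)

definition Gamma_pole_factor :: "nat \<Rightarrow> nat \<Rightarrow> 'a :: Gamma \<Rightarrow> 'a" where
  "Gamma_pole_factor k i u = (if i = k + 1 then Gamma (1 + u) else 1 / (u - of_nat (k - i + 1)))"

lemma Gamma_pole_factor_complex_of_real:
  "Gamma_pole_factor k i (complex_of_real x) = of_real (Gamma_pole_factor k i x)"
  by (simp add: Gamma_pole_factor_def flip: Gamma_complex_of_real)

lemma prod_Gamma_pole_factor:
  fixes u :: "'a :: Gamma"
  assumes "u \<notin> \<int>"
  shows "(\<Prod>i=1..k+1. Gamma_pole_factor k i u) = u * Gamma (u - of_nat k)"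
proof -
  have nonzero: "(\<Prod>m=1..k. u - of_nat m) \<noteq> 0"
    using assms by (auto simp: prod_zero_iff)
  have "u - of_nat k \<notin> \<int>\<^sub>\<le>\<^sub>0"
  proof
    assume "u - of_nat k \<in> \<int>\<^sub>\<le>\<^sub>0"
    then have "u - of_nat k + of_nat k \<in> \<int>"
      using nonpos_Ints_subset_Ints by (blast intro: Ints_add Ints_of_nat)
    with assms show False by simp
  qed
  then have "Gamma (1 + u) = u * (\<Prod>m=1..k. u - of_nat m) * Gamma (u - of_nat k)"
    using Gamma_plus1_iterated[of u k]
    by (simp add: atMost_atLeast0 prod.atLeast_Suc_atMost add.commute)
  moreover have "(\<Prod>i=1..k. u - of_nat (k - i + 1)) = (\<Prod>m=1..k. u - of_nat m)"
    by (rule prod.reindex_bij_witness[of _ "\<lambda>m. k - m + 1" "\<lambda>i. k - i + 1"]) auto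
  moreover have "(\<Prod>i=1..k+1. Gamma_pole_factor k i u)
                 = Gamma (1 + u) / (\<Prod>i=1..k. u - of_nat (k - i + 1))"
    by (simp add: Gamma_pole_factor_def prod_dividef)
  ultimately show ?thesis
    using nonzero by (simp add: field_simps)
qed

lemma Gamma_pole_factor_Gamma: "Gamma_pole_factor k (k + 1) = (\<lambda>u. Gamma (1 + u))"
  by (simp add: Gamma_pole_factor_def fun_eq_iff)

lemma Gamma_pole_factor_pole:
  "i \<noteq> k + 1 \<Longrightarrow> Gamma_pole_factor k i = (\<lambda>u. 1 / (u - of_nat (k - i + 1)))"
  by (simp add: Gamma_pole_factor_def fun_eq_iff)

lemma holomorphic_Gamma_pole_factor:
  assumes "i \<le> k + 1"
  shows "Gamma_pole_factor k i holomorphic_on ball (0 :: complex) 1"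
proof (cases "i = k + 1")
  case True
  have "(Gamma \<circ> (\<lambda>u. 1 + u)) holomorphic_on ball (0 :: complex) 1"
    by (rule holomorphic_on_compose_gen[OF _ holomorphic_Gamma_ball_1])
       (auto intro!: holomorphic_intros simp: dist_norm)
  then show ?thesis
    unfolding True Gamma_pole_factor_Gamma by (simp add: o_def)
next
  case False
  have "u \<noteq> of_nat (k - i + 1)" if "u \<in> ball 0 1" for u :: complex
  proof
    assume "u = of_nat (k - i + 1)"
    then have "norm u = real (k - i + 1)"
      by (simp only: norm_of_nat)
    with that show False by simp
  qed
  then show ?thesis
    using False by (auto simp: Gamma_pole_factor_pole intro!: holomorphic_intros)
qed

lemma holomorphic_prod_Gamma_pole_factor:
  "(\<lambda>u. \<Prod>i=1..k+1. Gamma_pole_factor k i u) holomorphic_on ball (0 :: complex) 1"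
  by (intro holomorphic_on_prod holomorphic_Gamma_pole_factor) simp

lemma higher_deriv_Gamma_pole_factor_0:
  assumes "i \<le> k + 1"
  shows "(deriv ^^ n) (Gamma_pole_factor k i) 0 / fact n = complex_of_real
           (if i = k + 1 then (deriv ^^ n) Gamma 1 / fact n else - 1 / real (k - i + 1) ^ (n + 1))"
proof (cases "i = k + 1")
  case True
  have "(deriv ^^ n) (\<lambda>u. Gamma (1 * u + 1 :: complex)) 0
        = 1 ^ n * (deriv ^^ n) Gamma (1 * 0 + 1)"
    by (rule higher_deriv_compose_linear'[OF holomorphic_Gamma_ball_1 open_ball[of 0 1] open_ball])
       (auto simp: dist_norm)
  then show ?thesis
    unfolding True Gamma_pole_factor_Gamma
    using higher_deriv_Gamma_complex_of_real[of 1 n] by (simp add: add.commute)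
next
  case False
  then show ?thesis
    by (simp add: Gamma_pole_factor_pole higher_deriv_inverse_diff power_minus' field_simps
             del: of_nat_Suc of_nat_add)
qed

lemma higher_deriv_prod_Gamma_pole_factor_0:
  "(deriv ^^ n) (\<lambda>u. \<Prod>i=1..k+1. Gamma_pole_factor k i u) (0 :: complex) = complex_of_real
     ((-1) ^ k * fact n * (\<Sum>l\<in>weak_compositions {1..k+1} n.
        (deriv ^^ l (k+1)) Gamma 1 / fact (l (k+1)) * (\<Prod>i=1..k. 1 / real (k - i + 1) ^ (l i + 1))))"
    (is "_ = complex_of_real ((-1) ^ k * fact n * (\<Sum>l\<in>_. ?R l))")
proof -
  define c where "c = (\<lambda>l i. if i = k + 1 then (deriv ^^ l i) Gamma 1 / fact (l i)
                                else - 1 / real (k - i + 1) ^ (l i + 1))"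
  have "(\<Prod>i=1..k+1. c l i) = (-1) ^ k * ?R l" for l
  proof -
    have "(\<Prod>i=1..k. c l i) = (\<Prod>i=1..k. - (1 / real (k - i + 1) ^ (l i + 1)))"
      by (intro prod.cong refl) (simp add: c_def)
    then show ?thesis
      by (simp add: prod_uminus c_def)
  qed
  moreover have "(\<Prod>i=1..k+1. (deriv ^^ l i) (Gamma_pole_factor k i) 0 / fact (l i))
                 = complex_of_real (\<Prod>i=1..k+1. c l i)" for l
    unfolding of_real_prod c_def
    by (intro prod.cong refl higher_deriv_Gamma_pole_factor_0) simp
  moreover have "(deriv ^^ n) (\<lambda>u. \<Prod>i=1..k+1. Gamma_pole_factor k i u) (0 :: complex)
      = fact n * (\<Sum>l\<in>weak_compositions {1..k+1} n.
                    \<Prod>i=1..k+1. (deriv ^^ l i) (Gamma_pole_factor k i) 0 / fact (l i))"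
    by (rule higher_deriv_prod) (auto intro: holomorphic_Gamma_pole_factor)
  ultimately have "(deriv ^^ n) (\<lambda>u. \<Prod>i=1..k+1. Gamma_pole_factor k i u) (0 :: complex)
                   = fact n * (\<Sum>l\<in>weak_compositions {1..k+1} n. complex_of_real ((-1) ^ k * ?R l))"
    by simp
  then show ?thesis
    by (simp only: of_real_mult of_real_sum of_real_of_nat_eq flip: sum_distrib_left) simp
qed

theorem lemma3:
  fixes k j :: nat and f :: "real \<Rightarrow> real"
  assumes f_def: "f = (\<lambda>s. (s - 1/2 - real k) * Gamma (1/2 - s))"
    and j: "j \<ge> 1"
  shows "((\<lambda>s. (deriv ^^ j) f s) \<longlongrightarrow>
           (-1) ^ (k + j - 1) * fact j *
           (\<Sum>l \<in> {l :: nat \<Rightarrow> nat. (\<forall>i. i \<notin> {1..k+1} \<longrightarrow> l i = 0)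
                                   \<and> (\<Sum>i=1..k+1. l i) = j}.
              (deriv ^^ l (k+1)) Gamma (1::real) / fact (l (k+1)) *
              (\<Prod>i=1..k. 1 / (real (k - i + 1)) ^ (l i + 1))))
         (at (1/2 + real k))"
proof -
  define a where "a = 1/2 + real k"
  define S where "S = (\<Sum>l\<in>weak_compositions {1..k+1} j.
    (deriv ^^ l (k+1)) Gamma 1 / fact (l (k+1)) * (\<Prod>i=1..k. 1 / real (k - i + 1) ^ (l i + 1)))"
  define P :: "complex \<Rightarrow> complex" where "P = (\<lambda>u. - (\<Prod>i=1..k+1. Gamma_pole_factor k i u))"
  have "P holomorphic_on ball 0 1"
    unfolding P_def by (intro holomorphic_intros holomorphic_prod_Gamma_pole_factor)
  moreover have "P (of_real (a - x)) = of_real (f x)" if "x \<in> ball a 1 - {a}" for x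
  proof -
    have "a - x \<notin> \<int>"
      using that Ints_nonzero_abs_less1[of "a - x"] by (auto simp: dist_norm)
    then have "(\<Prod>i=1..k+1. Gamma_pole_factor k i (a - x)) = (a - x) * Gamma (a - x - real k)"
      by (rule prod_Gamma_pole_factor)
    then have "f x = - (\<Prod>i=1..k+1. Gamma_pole_factor k i (a - x))"
      by (simp add: f_def a_def algebra_simps)
    then show ?thesis
      by (simp only: P_def Gamma_pole_factor_complex_of_real flip: of_real_prod of_real_minus)
  qed
  ultimately have "((deriv ^^ j) f \<longlongrightarrow> (-1) ^ j * Re ((deriv ^^ j) P 0)) (at a)"
    by (intro tendsto_higher_deriv_of_reflected_holomorphic) auto
  also have "(deriv ^^ j) P 0 = - (deriv ^^ j) (\<lambda>u. \<Prod>i=1..k+1. Gamma_pole_factor k i u) 0"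
    unfolding P_def
    by (rule higher_deriv_uminus[OF holomorphic_prod_Gamma_pole_factor]) auto
  also have "\<dots> = - complex_of_real ((-1) ^ k * fact j * S)"
    unfolding S_def higher_deriv_prod_Gamma_pole_factor_0 ..
  also have "(-1) ^ j * Re (- complex_of_real ((-1) ^ k * fact j * S))
             = (-1) ^ (k + j - 1) * fact j * S"
    using j by (cases j) (simp_all add: power_add)
  finally show ?thesis
    by (simp add: a_def S_def weak_compositions_def)
qed

end
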